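(* Let $B(x)=\frac{x}{1+x^2}$, $B_0(x)=x$ and $B_j(x)=B(B_{j-1}(x))$ for $j\ge1$. For every $j\ge0$, the equation $B_j(x)=-1$ has exactly $2^j$ distinct roots in $\mathbb{C}$. *)

theory Defs
  imports Complex_Main
begin

definition Bmap :: "complex \<Rightarrow> complex" where
  "Bmap x = x / (1 + x^2)"

fun Biter :: "nat \<Rightarrow> complex \<Rightarrow> complex" where
  "Biter 0 x = x"
| "Biter (Suc j) x = Bmap (Biter j x)"

end

theory Submission
  imports Defs
begin

text \<open>For \<open>y \<noteq> 0\<close> the equation \<open>B(x) = y\<close> is the quadratic \<open>y x\<^sup>2 - x + y = 0\<close>,
  whose discriminant is \<open>1 - 4 y\<^sup>2\<close>; so every \<open>y \<notin> {0, 1/2, -1/2}\<close> has exactly two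
  preimages under \<open>B\<close>. The three exceptional values are real, and \<open>B\<close> maps the real
  line into \<open>[-1/2, 1/2]\<close>, so no real point is sent to \<open>-1\<close> by a positive iterate.
  Hence no root of \<open>B\<^sub>j(x) = -1\<close> is exceptional, and each of them splits into exactly
  two roots of \<open>B\<^sub>j\<^sub>+\<^sub>1(x) = -1\<close>.\<close>

lemma Biter_Suc_right: "Biter (Suc j) x = Biter j (Bmap x)"
  by (induction j arbitrary: x) auto

lemma Bmap_eq_iff:
  assumes "y \<noteq> 0"
  shows "Bmap x = y \<longleftrightarrow> y * x^2 - x + y = 0"
proof (cases "1 + x^2 = 0")
  case True
  \<comment> \<open>the pole: \<open>Bmap x = 0\<close> by division by zero, while the quadratic takes the value \<open>-x \<noteq> 0\<close>\<close>
  then have "x \<noteq> 0" by auto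
  moreover have "y * x^2 - x + y = y * (1 + x^2) - x"
    by (simp add: algebra_simps)
  ultimately have "y * x^2 - x + y \<noteq> 0"
    using True by (metis diff_0 mult_zero_right neg_equal_0_iff_equal)
  moreover have "Bmap x = 0"
    using True by (simp add: Bmap_def)
  ultimately show ?thesis
    using assms by simp
next
  case False
  then have "Bmap x = y \<longleftrightarrow> x = y * (1 + x^2)"
    by (auto simp: Bmap_def field_simps)
  then show ?thesis by (auto simp: algebra_simps)
qed

lemma card_Bmap_preimage:
  assumes "y \<noteq> 0" "4 * y^2 \<noteq> 1"
  shows "card {x. Bmap x = y} = 2"
proof -
  define s where "s = csqrt (1 - 4 * y^2)"
  have s2: "s^2 = 1 - 4 * y^2" unfolding s_def by simp
  have "s \<noteq> 0" using s2 assms(2) by auto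
  define r1 where "r1 = (1 + s) / (2 * y)"
  define r2 where "r2 = (1 - s) / (2 * y)"
  have factor: "y * x^2 - x + y = y * (x - r1) * (x - r2)" for x
  proof -
    have "y * (x - r1) * (x - r2) = y * x^2 - x + (1 - s^2) / (4 * y)"
      unfolding r1_def r2_def using assms(1) by (simp add: field_simps power2_eq_square)
    also have "(1 - s^2) / (4 * y) = y"
      using s2 assms(1) by (simp add: field_simps power2_eq_square)
    finally show ?thesis by simp
  qed
  have "{x. Bmap x = y} = {r1, r2}"
    using assms(1) by (auto simp: Bmap_eq_iff factor)
  moreover have "r1 \<noteq> r2"
    using \<open>s \<noteq> 0\<close> assms(1) unfolding r1_def r2_def by (auto simp: field_simps)
  ultimately show ?thesis by simp
qed

lemma norm_Bmap_real_le:
  assumes "x \<in> \<real>"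
  shows "norm (Bmap x) \<le> 1/2"
proof -
  obtain t where x: "x = of_real t" using assms by (auto elim: Reals_cases)
  have pos: "1 + t^2 > 0" by (simp add: add_pos_nonneg)
  have "2 * \<bar>t\<bar> \<le> 1 + t^2"
    using zero_le_power2[of "\<bar>t\<bar> - 1"] by (simp add: power2_eq_square algebra_simps)
  then have "\<bar>t\<bar> / (1 + t^2) \<le> 1/2"
    using pos by (simp add: pos_divide_le_eq)
  moreover have "norm (Bmap x) = \<bar>t\<bar> / (1 + t^2)"
  proof -
    have "Bmap x = of_real (t / (1 + t^2))"
      unfolding x Bmap_def by simp
    then show ?thesis
      using pos by (simp only: norm_of_real) (simp add: abs_divide)
  qed
  ultimately show ?thesis by simp
qed

lemma Biter_real: "x \<in> \<real> \<Longrightarrow> Biter j x \<in> \<real>"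
  by (induction j) (auto simp: Bmap_def)

lemma Biter_real_neq_minus_one:
  assumes "x \<in> \<real>" "x \<noteq> -1"
  shows "Biter j x \<noteq> -1"
proof (cases j)
  case (Suc k)
  have "norm (Biter j x) \<le> 1/2"
    using Suc norm_Bmap_real_le[OF Biter_real[OF assms(1)]] by simp
  then show ?thesis by auto
qed (use assms in simp)

lemma four_square_eq_one_imp_real:
  fixes y :: complex
  assumes "4 * y^2 = 1"
  shows "y \<in> \<real>"
proof -
  have "(2 * y - 1) * (2 * y + 1) = 0"
    using assms by (simp add: algebra_simps power2_eq_square)
  then have "2 * y - 1 = 0 \<or> 2 * y + 1 = 0"
    by simp
  then have "y = of_real (1/2) \<or> y = of_real (-1/2)"
    by (auto simp: field_simps add_eq_0_iff)
  then show ?thesis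
    by (metis Reals_of_real)
qed

lemma Biter_root_not_exceptional:
  assumes "Biter j y = -1"
  shows "y \<noteq> 0" "4 * y^2 \<noteq> 1"
proof -
  have "y \<notin> \<real> \<or> y = -1"
    using assms Biter_real_neq_minus_one by blast
  then show "y \<noteq> 0" "4 * y^2 \<noteq> 1"
    using four_square_eq_one_imp_real[of y] by auto
qed

theorem proposition2p8:
  fixes j :: nat
  shows "card {x :: complex. Biter j x = -1} = 2 ^ j"
proof (induction j)
  case (Suc j)
  let ?S = "{x :: complex. Biter j x = -1}"
  have "finite ?S"
    using Suc by (metis card.infinite power_not_zero zero_neq_numeral)
  have "{x. Biter (Suc j) x = -1} = (\<Union>y\<in>?S. {x. Bmap x = y})"
    by (auto simp del: Biter.simps simp add: Biter_Suc_right)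
  moreover have two: "card {x. Bmap x = y} = 2" if "y \<in> ?S" for y
    using that card_Bmap_preimage Biter_root_not_exceptional by blast
  moreover have "card (\<Union>y\<in>?S. {x. Bmap x = y}) = (\<Sum>y\<in>?S. card {x. Bmap x = y})"
    using \<open>finite ?S\<close> two by (intro card_UN_disjoint) (auto intro: card_ge_0_finite)
  ultimately show ?case
    using Suc by simp
qed simp

end
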